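(* Let $\vdash\subseteq Sqt$ satisfy (A), (Mon), (Cut), (Com), ($\wedge$I), ($\wedge$E), ($\to$0), ($\to$1), ($\to$2). For all $\varphi,\psi\in Form$ and $\Gamma\subseteq Form$, if $\Gamma\nvdash\varphi\to\psi$, then there is a $\vdash$-deduction closed $\Delta\subseteq Form$ such that $\varphi\in\Delta$, $\psi\notin\Delta$, $\Gamma R_\to\Delta$, and for every $\chi\notin\Delta$, $\psi\in\Gamma(\Delta,\chi)$.
   Context: $Form$: $\varphi::=p\mid\bot\mid(\varphi\wedge\varphi)\mid(\varphi\to\varphi)$ over a countable set $P0$ ($\wedge$ left-associative, binds tighter than $\to$). Sequents are pairs $(\Gamma,\varphi)$, $\Gamma\subseteq Form$; $\Gamma\vdash\varphi$ means $(\Gamma,\varphi)\in\vdash$, $\psi\vdash\varphi$ means $\{\psi\}\vdash\varphi$, $\vdash\varphi$ means $\emptyset\vdash\varphi$. Rules (for all $\Gamma,\Delta\subseteq Form$, formulas): (A) $\Gamma\cup\{\varphi\}\vdash\varphi$; (Mon) $\Gamma\subseteq\Delta$, $\Gamma\vdash\varphi\Rightarrow\Delta\vdash\varphi$; (Cut) $\Gamma\cup\{\psi\}\vdash\varphi$, $\Delta\vdash\psi\Rightarrow\Gamma\cup\Delta\vdash\varphi$; (Com) $\Gamma\vdash\varphi\Rightarrow\Gamma'\vdash\varphi$ for some finite $\Gamma'\subseteq\Gamma$; ($\wedge$I) $\{\varphi,\psi\}\vdash\varphi\wedge\psi$; ($\wedge$E) $\varphi\wedge\psi\vdash\varphi$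 and $\varphi\wedge\psi\vdash\psi$; ($\to$0) $\vdash\varphi\to\varphi$; ($\to$1) $\Gamma\vdash\varphi\Rightarrow\{\psi\to\chi:\chi\in\Gamma\}\vdash\psi\to\varphi$; ($\to$2) $\{\varphi\to\psi,\psi\to\chi\}\vdash\varphi\to\chi$. $\Delta$ is $\vdash$-deduction closed iff $\Delta\vdash\psi$ implies $\psi\in\Delta$. $\Gamma R_\to\Delta$ iff for all $\varphi,\psi$, $\varphi\to\psi\in\Gamma$ and $\varphi\in\Delta$ imply $\psi\in\Delta$. $\Gamma(\Delta,\chi)=\{\psi\in Form:$ there is $\alpha\in\Delta$ with $\Gamma\vdash\alpha\wedge\chi\to\psi\}$. *)

theory Defs
  imports Main "HOL-Library.Countable"
begin

datatype 'p form = Atom 'p | Bot | Conj "'p form" "'p form" | Imp "'p form" "'p form"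

type_synonym 'p cons = "'p form set \<Rightarrow> 'p form \<Rightarrow> bool"

definition rule_A :: "'p cons \<Rightarrow> bool" where
  "rule_A D \<longleftrightarrow> (\<forall>\<Gamma> \<phi>. D (\<Gamma> \<union> {\<phi>}) \<phi>)"
definition rule_Mon :: "'p cons \<Rightarrow> bool" where
  "rule_Mon D \<longleftrightarrow> (\<forall>\<Gamma> \<Delta> \<phi>. \<Gamma> \<subseteq> \<Delta> \<longrightarrow> D \<Gamma> \<phi> \<longrightarrow> D \<Delta> \<phi>)"
definition rule_Cut :: "'p cons \<Rightarrow> bool" where
  "rule_Cut D \<longleftrightarrow> (\<forall>\<Gamma> \<Delta> \<phi> \<psi>. D (\<Gamma> \<union> {\<psi>}) \<phi> \<longrightarrow> D \<Delta> \<psi> \<longrightarrow> D (\<Gamma> \<union> \<Delta>) \<phi>)"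
definition rule_Com :: "'p cons \<Rightarrow> bool" where
  "rule_Com D \<longleftrightarrow> (\<forall>\<Gamma> \<phi>. D \<Gamma> \<phi> \<longrightarrow> (\<exists>\<Gamma>'. finite \<Gamma>' \<and> \<Gamma>' \<subseteq> \<Gamma> \<and> D \<Gamma>' \<phi>))"
definition rule_ConjI :: "'p cons \<Rightarrow> bool" where
  "rule_ConjI D \<longleftrightarrow> (\<forall>\<phi> \<psi>. D {\<phi>, \<psi>} (Conj \<phi> \<psi>))"
definition rule_ConjE :: "'p cons \<Rightarrow> bool" where
  "rule_ConjE D \<longleftrightarrow> (\<forall>\<phi> \<psi>. D {Conj \<phi> \<psi>} \<phi> \<and> D {Conj \<phi> \<psi>} \<psi>)"
definition rule_Imp0 :: "'p cons \<Rightarrow> bool" where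
  "rule_Imp0 D \<longleftrightarrow> (\<forall>\<phi>. D {} (Imp \<phi> \<phi>))"
definition rule_Imp1 :: "'p cons \<Rightarrow> bool" where
  "rule_Imp1 D \<longleftrightarrow> (\<forall>\<Gamma> \<phi> \<psi>. D \<Gamma> \<phi> \<longrightarrow> D ((\<lambda>\<chi>. Imp \<psi> \<chi>) ` \<Gamma>) (Imp \<psi> \<phi>))"
definition rule_Imp2 :: "'p cons \<Rightarrow> bool" where
  "rule_Imp2 D \<longleftrightarrow> (\<forall>\<phi> \<psi> \<chi>. D {Imp \<phi> \<psi>, Imp \<psi> \<chi>} (Imp \<phi> \<chi>))"

definition ded_closed :: "'p cons \<Rightarrow> 'p form set \<Rightarrow> bool" where
  "ded_closed D \<Delta> \<longleftrightarrow> (\<forall>\<psi>. D \<Delta> \<psi> \<longrightarrow> \<psi> \<in> \<Delta>)"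

definition R_imp :: "'p form set \<Rightarrow> 'p form set \<Rightarrow> bool" where
  "R_imp \<Gamma> \<Delta> \<longleftrightarrow> (\<forall>\<phi> \<psi>. Imp \<phi> \<psi> \<in> \<Gamma> \<longrightarrow> \<phi> \<in> \<Delta> \<longrightarrow> \<psi> \<in> \<Delta>)"

definition gen_set :: "'p cons \<Rightarrow> 'p form set \<Rightarrow> 'p form set \<Rightarrow> 'p form \<Rightarrow> 'p form set" where
  "gen_set D \<Gamma> \<Delta> \<chi> = {\<psi>. \<exists>\<alpha>\<in>\<Delta>. D \<Gamma> (Imp (Conj \<alpha> \<chi>) \<psi>)}"

end

theory Submission
  imports Defs
begin

text \<open>By Zorn's lemma, extend the deductive closure of \<open>\<phi>\<close> to a deductively closed set \<open>\<Delta>\<close>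
  maximal among those containing no \<open>\<alpha>\<close> with \<open>\<Gamma> \<turnstile> \<alpha> \<rightarrow> \<psi>\<close>. Since \<open>\<Gamma> \<turnstile> \<psi> \<rightarrow> \<psi>\<close>, \<open>\<psi> \<notin> \<Delta>\<close>.
  If \<open>\<chi> \<notin> \<Delta>\<close>, the closure of \<open>\<Delta> \<union> {\<chi>}\<close> contains some \<open>\<beta>\<close> with \<open>\<Gamma> \<turnstile> \<beta> \<rightarrow> \<psi>\<close>; by compactness
  \<open>\<beta>\<close> follows from \<open>\<alpha> \<and> \<chi>\<close> for a single conjunction \<open>\<alpha> \<in> \<Delta>\<close>, so \<open>\<Gamma> \<turnstile> \<alpha> \<and> \<chi> \<rightarrow> \<psi>\<close>.
  Finally \<open>\<Gamma> R\<^sub>\<rightarrow> \<Delta>\<close>: if \<open>\<chi> \<rightarrow> \<chi>' \<in> \<Gamma>\<close>, \<open>\<chi> \<in> \<Delta>\<close> and \<open>\<chi>' \<notin> \<Delta>\<close>, pick \<open>\<alpha> \<in> \<Delta>\<close> with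
  \<open>\<Gamma> \<turnstile> \<alpha> \<and> \<chi>' \<rightarrow> \<psi>\<close>; then \<open>\<Gamma> \<turnstile> \<alpha> \<and> \<chi> \<rightarrow> \<alpha> \<and> \<chi>'\<close> by (\<open>\<rightarrow>\<close>1), so \<open>\<alpha> \<and> \<chi> \<in> \<Delta>\<close> violates
  the avoidance of \<open>\<psi>\<close>.\<close>

locale consequence_relation =
  fixes D :: "'p cons"
  assumes A: "rule_A D" and Mon: "rule_Mon D" and Cut: "rule_Cut D" and Com: "rule_Com D"
    and ConjI: "rule_ConjI D" and ConjE: "rule_ConjE D"
    and Imp0: "rule_Imp0 D" and Imp1: "rule_Imp1 D" and Imp2: "rule_Imp2 D"
begin

lemma derives_member: "x \<in> S \<Longrightarrow> D S x"
  using A unfolding rule_A_def by (metis insert_absorb insert_is_Un sup_commute)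

lemma derives_mono: "D S x \<Longrightarrow> S \<subseteq> T \<Longrightarrow> D T x"
  using Mon unfolding rule_Mon_def by blast

lemma derives_cut: "D (S \<union> {y}) x \<Longrightarrow> D T y \<Longrightarrow> D (S \<union> T) x"
  using Cut unfolding rule_Cut_def by blast

lemma derives_compact: "D S x \<Longrightarrow> \<exists>F. finite F \<and> F \<subseteq> S \<and> D F x"
  using Com unfolding rule_Com_def by blast

lemma derives_cut_finite:
  assumes "finite F" "\<forall>x\<in>F. D S x" "D (F \<union> S) b"
  shows "D S b"
  using assms
proof (induction F rule: finite_induct)
  case empty
  then show ?case by simp
next
  case (insert x F)
  have "D ((F \<union> S) \<union> {x}) b"
    using insert.prems(2) by (simp add: Un_ac)
  then have "D ((F \<union> S) \<union> S) b"
    using insert.prems(1) derives_cut[of "F \<union> S" x b S] by simp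
  then show ?case
    using insert.IH insert.prems(1) by (simp add: Un_ac)
qed

lemma derives_trans: "\<forall>x\<in>F. D S x \<Longrightarrow> D F b \<Longrightarrow> D S b"
proof -
  assume hyps: "\<forall>x\<in>F. D S x" "D F b"
  obtain F' where F': "finite F'" "F' \<subseteq> F" "D F' b"
    using derives_compact[OF hyps(2)] by blast
  then have "D (F' \<union> S) b"
    using derives_mono[of F' b "F' \<union> S"] by simp
  moreover have "\<forall>x\<in>F'. D S x"
    using hyps(1) F'(2) by blast
  ultimately show ?thesis
    using derives_cut_finite[OF F'(1)] by blast
qed

lemma ded_closed_consequences: "ded_closed D {b. D S b}"
  unfolding ded_closed_def using derives_trans[of "{b. D S b}" S] by blast

lemma ded_closed_Union_chain:
  assumes "C \<noteq> {}" "subset.chain {X. ded_closed D X} C"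
  shows "ded_closed D (\<Union>C)"
  unfolding ded_closed_def
proof (intro allI impI)
  fix b assume "D (\<Union>C) b"
  then obtain F where F: "finite F" "F \<subseteq> \<Union>C" "D F b"
    using derives_compact by blast
  then obtain B where "B \<in> C" "F \<subseteq> B"
    using finite_subset_Union_chain assms by blast
  moreover from this have "ded_closed D B"
    using assms(2) unfolding subset.chain_def by blast
  ultimately show "b \<in> \<Union>C"
    using F(3) derives_mono unfolding ded_closed_def by blast
qed

text \<open>(\<open>\<rightarrow>\<close>1) turns \<open>{a} \<turnstile> b\<close> into \<open>{a \<rightarrow> a} \<turnstile> a \<rightarrow> b\<close>, and (\<open>\<rightarrow>\<close>0) discharges \<open>a \<rightarrow> a\<close>.\<close>

lemma derives_imp: "D {a} b \<Longrightarrow> D S (Imp a b)"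
proof -
  assume "D {a} b"
  then have "D ({} \<union> {Imp a a}) (Imp a b)"
    using Imp1 unfolding rule_Imp1_def by (metis image_empty image_insert sup_bot_left)
  moreover have "D {} (Imp a a)"
    using Imp0 unfolding rule_Imp0_def by blast
  ultimately have "D {} (Imp a b)"
    using derives_cut by fastforce
  then show ?thesis
    using derives_mono[of "{}"] by simp
qed

lemma derives_imp_trans: "D S (Imp a b) \<Longrightarrow> D S (Imp b c) \<Longrightarrow> D S (Imp a c)"
proof -
  have "D {Imp a b, Imp b c} (Imp a c)"
    using Imp2 unfolding rule_Imp2_def by blast
  then show "D S (Imp a b) \<Longrightarrow> D S (Imp b c) \<Longrightarrow> D S (Imp a c)"
    by (rule derives_trans[rotated]) simp
qed

lemma derives_Conj: "D S a \<Longrightarrow> D S b \<Longrightarrow> D S (Conj a b)"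
proof -
  have "D {a, b} (Conj a b)"
    using ConjI unfolding rule_ConjI_def by blast
  then show "D S a \<Longrightarrow> D S b \<Longrightarrow> D S (Conj a b)"
    by (rule derives_trans[rotated]) simp
qed

lemma derives_Conj_right: "D {Conj a b} b"
  using ConjE unfolding rule_ConjE_def by blast

lemma derives_Conj_left:
  assumes "D {a} x"
  shows "D {Conj a b} x"
proof -
  have "\<forall>y\<in>{a}. D {Conj a b} y"
    using ConjE unfolding rule_ConjE_def by blast
  from this assms show ?thesis
    by (rule derives_trans)
qed

lemma derives_imp_Conj: "D S (Imp c a) \<Longrightarrow> D S (Imp c b) \<Longrightarrow> D S (Imp c (Conj a b))"
proof -
  have "D ((\<lambda>x. Imp c x) ` {a, b}) (Imp c (Conj a b))"
    using Imp1 ConjI unfolding rule_Imp1_def rule_ConjI_def by blast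
  then show "D S (Imp c a) \<Longrightarrow> D S (Imp c b) \<Longrightarrow> D S (Imp c (Conj a b))"
    by (rule derives_trans[rotated]) simp
qed

lemma ded_closed_Conj:
  assumes "ded_closed D X" "a \<in> X" "b \<in> X"
  shows "Conj a b \<in> X"
proof -
  have "D X (Conj a b)"
    using derives_Conj derives_member assms(2,3) by simp
  with assms(1) show ?thesis
    unfolding ded_closed_def by blast
qed

lemma derives_insert_Conj: "\<forall>x\<in>F. D {a} x \<Longrightarrow> \<forall>x\<in>insert b F. D {Conj a b} x"
  using derives_Conj_left derives_Conj_right by blast

lemma ded_closed_finite_subset_single_premise:
  assumes "finite F" "F \<subseteq> X" "ded_closed D X" "X \<noteq> {}"
  shows "\<exists>\<alpha>\<in>X. \<forall>x\<in>F. D {\<alpha>} x"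
  using assms
proof (induction F rule: finite_induct)
  case empty
  then show ?case by blast
next
  case (insert x F)
  then obtain \<alpha> where "\<alpha> \<in> X" "\<forall>y\<in>F. D {\<alpha>} y"
    by blast
  then have "Conj \<alpha> x \<in> X" "\<forall>y\<in>insert x F. D {Conj \<alpha> x} y"
    using ded_closed_Conj[of X \<alpha> x] derives_insert_Conj[of F \<alpha> x] insert.prems by simp_all
  then show ?case
    by blast
qed

definition avoiding :: "'p form set \<Rightarrow> 'p form \<Rightarrow> 'p form set \<Rightarrow> bool" where
  "avoiding \<Gamma> \<psi> X \<longleftrightarrow> ded_closed D X \<and> (\<forall>\<alpha>\<in>X. \<not> D \<Gamma> (Imp \<alpha> \<psi>))"

lemma avoiding_consequences:
  "\<not> D \<Gamma> (Imp \<phi> \<psi>) \<Longrightarrow> avoiding \<Gamma> \<psi> {b. D {\<phi>} b}"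
  unfolding avoiding_def using ded_closed_consequences derives_imp derives_imp_trans by blast

lemma avoiding_not_mem: "avoiding \<Gamma> \<psi> X \<Longrightarrow> \<psi> \<notin> X"
  using Imp0 derives_mono[of "{}" "Imp \<psi> \<psi>" \<Gamma>] unfolding avoiding_def rule_Imp0_def by blast

lemma maximal_avoiding_exists:
  assumes "avoiding \<Gamma> \<psi> X"
  shows "\<exists>M. X \<subseteq> M \<and> avoiding \<Gamma> \<psi> M \<and> (\<forall>Y. avoiding \<Gamma> \<psi> Y \<longrightarrow> M \<subseteq> Y \<longrightarrow> Y = M)"
proof -
  let ?F = "{Y. avoiding \<Gamma> \<psi> Y \<and> X \<subseteq> Y}"
  have chains: "\<Union>C \<in> ?F" if "C \<noteq> {}" "subset.chain ?F C" for C
  proof -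
    have C: "C \<subseteq> ?F"
      using that(2) unfolding subset.chain_def by blast
    then have "subset.chain {X. ded_closed D X} C"
      using that(2) unfolding subset.chain_def avoiding_def by blast
    then have "ded_closed D (\<Union>C)"
      using ded_closed_Union_chain[OF that(1)] by blast
    moreover have "\<forall>\<alpha>\<in>\<Union>C. \<not> D \<Gamma> (Imp \<alpha> \<psi>)" "X \<subseteq> \<Union>C"
      using C that(1) unfolding avoiding_def by blast+
    ultimately show ?thesis
      unfolding avoiding_def by blast
  qed
  have "?F \<noteq> {}"
    using assms by blast
  then obtain M where M: "M \<in> ?F" and maximal: "\<forall>Y\<in>?F. M \<subseteq> Y \<longrightarrow> Y = M"
    using subset_Zorn_nonempty[OF _ chains] by blast
  have "Y = M" if "avoiding \<Gamma> \<psi> Y" "M \<subseteq> Y" for Y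
    using maximal M that by blast
  with M show ?thesis
    by blast
qed

lemma maximal_avoiding_gen_set:
  assumes M: "avoiding \<Gamma> \<psi> M" "M \<noteq> {}"
    and maximal: "\<forall>Y. avoiding \<Gamma> \<psi> Y \<longrightarrow> M \<subseteq> Y \<longrightarrow> Y = M"
    and "\<chi> \<notin> M"
  shows "\<exists>\<alpha>\<in>M. D \<Gamma> (Imp (Conj \<alpha> \<chi>) \<psi>)"
proof -
  let ?Y = "{b. D (insert \<chi> M) b}"
  have "M \<subseteq> ?Y" "?Y \<noteq> M"
    using derives_member \<open>\<chi> \<notin> M\<close> by auto
  then have "\<not> avoiding \<Gamma> \<psi> ?Y"
    using maximal by blast
  then obtain \<beta> where \<beta>: "D (insert \<chi> M) \<beta>" "D \<Gamma> (Imp \<beta> \<psi>)"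
    using ded_closed_consequences unfolding avoiding_def by blast
  obtain F where F: "finite F" "F \<subseteq> insert \<chi> M" "D F \<beta>"
    using derives_compact[OF \<beta>(1)] by blast
  obtain \<alpha> where \<alpha>: "\<alpha> \<in> M" "\<forall>x\<in>F - {\<chi>}. D {\<alpha>} x"
    using ded_closed_finite_subset_single_premise[of "F - {\<chi>}" M] F M
    unfolding avoiding_def by blast
  have "\<forall>x\<in>F. D {Conj \<alpha> \<chi>} x"
    using derives_insert_Conj[OF \<alpha>(2), of \<chi>] by blast
  then have "D {Conj \<alpha> \<chi>} \<beta>"
    using F(3) by (rule derives_trans)
  then have "D \<Gamma> (Imp (Conj \<alpha> \<chi>) \<psi>)"
    using derives_imp_trans[OF derives_imp \<beta>(2)] by blast
  with \<alpha>(1) show ?thesis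
    by blast
qed

lemma avoiding_R_imp:
  assumes M: "avoiding \<Gamma> \<psi> M"
    and gen: "\<And>\<chi>. \<chi> \<notin> M \<Longrightarrow> \<exists>\<alpha>\<in>M. D \<Gamma> (Imp (Conj \<alpha> \<chi>) \<psi>)"
  shows "R_imp \<Gamma> M"
  unfolding R_imp_def
proof (intro allI impI)
  fix p q assume pq: "Imp p q \<in> \<Gamma>" "p \<in> M"
  show "q \<in> M"
  proof (rule ccontr)
    assume "q \<notin> M"
    then obtain \<alpha> where \<alpha>: "\<alpha> \<in> M" "D \<Gamma> (Imp (Conj \<alpha> q) \<psi>)"
      using gen by blast
    have "D \<Gamma> (Imp (Conj \<alpha> p) \<alpha>)"
      using derives_imp[OF derives_Conj_left[OF derives_member[of \<alpha> "{\<alpha>}"]]] by simp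
    moreover have "D \<Gamma> (Imp (Conj \<alpha> p) q)"
      using derives_imp_trans[OF derives_imp[OF derives_Conj_right] derives_member[OF pq(1)]] .
    ultimately have "D \<Gamma> (Imp (Conj \<alpha> p) \<psi>)"
      using derives_imp_trans[OF derives_imp_Conj \<alpha>(2)] by blast
    moreover have "Conj \<alpha> p \<in> M"
      using M ded_closed_Conj[OF _ \<alpha>(1) pq(2)] unfolding avoiding_def by blast
    ultimately show False
      using M unfolding avoiding_def by blast
  qed
qed

end

theorem mainTheorem10:
  fixes D :: "('p::countable) cons"
  assumes "rule_A D" "rule_Mon D" "rule_Cut D" "rule_Com D" "rule_ConjI D" "rule_ConjE D"
    "rule_Imp0 D" "rule_Imp1 D" "rule_Imp2 D"
    and "\<not> D \<Gamma> (Imp \<phi> \<psi>)"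
  shows "\<exists>\<Delta>. ded_closed D \<Delta> \<and> \<phi> \<in> \<Delta> \<and> \<psi> \<notin> \<Delta> \<and> R_imp \<Gamma> \<Delta> \<and>
           (\<forall>\<chi>. \<chi> \<notin> \<Delta> \<longrightarrow> \<psi> \<in> gen_set D \<Gamma> \<Delta> \<chi>)"
proof -
  interpret consequence_relation D
    using assms(1-9) by unfold_locales
  obtain M where M: "{b. D {\<phi>} b} \<subseteq> M" "avoiding \<Gamma> \<psi> M"
    and maximal: "\<forall>Y. avoiding \<Gamma> \<psi> Y \<longrightarrow> M \<subseteq> Y \<longrightarrow> Y = M"
    using maximal_avoiding_exists[OF avoiding_consequences[OF assms(10)]] by blast
  have "\<phi> \<in> M"
    using M(1) derives_member by blast
  then have gen: "\<exists>\<alpha>\<in>M. D \<Gamma> (Imp (Conj \<alpha> \<chi>) \<psi>)" if "\<chi> \<notin> M" for \<chi>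
    using maximal_avoiding_gen_set[OF M(2) _ maximal that] by blast
  have "ded_closed D M" "\<psi> \<notin> M" "R_imp \<Gamma> M"
    using M(2) avoiding_not_mem avoiding_R_imp[OF M(2) gen]
    unfolding avoiding_def by blast+
  with \<open>\<phi> \<in> M\<close> gen show ?thesis
    unfolding gen_set_def by blast
qed

end
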